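(* Let $q\ge2$ and $s\ge2$ be integers. There exist constants $l_0\in\mathbb{N}$, $c>0$ and $C>0$ (depending only on $q,s$) such that the following holds. Let $f\colon\mathbb{N}_0\to\mathbb{U}$ be $q$-multiplicative and let $(K_i)_{i\ge0}$ be integers $\ge0$ and $(\varepsilon_i)_{i\ge0}$ positive reals such that $K_0=0$, $L_i:=K_{i+1}-K_i\ge l_0$ and $$\|S^{K_i}f\|_{U^s[q^{L_i}]}\le 1-\varepsilon_i\quad\text{for all }i\ge0.$$ Then for every $M\ge0$, every integer $K\ge K_M$ and every $\mathbf r=(r_\omega)_{\omega\in\{0,1\}^s}\in\mathbb{N}_0^{2^s}$ with $0\le r_\omega\le s$ for all $\omega$, $$|A(f,\mathbf r,K)|\le C\exp\Big(-c\sum_{i=0}^{M-1}\varepsilon_i\Big).$$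
   Context: $\mathbb{N}_0=\{0,1,\dots\}$, $\mathbb{U}=\{z\in\mathbb{C}:|z|=1\}$. $f$ is $q$-multiplicative if $f(m+n)=f(m)f(n)$ whenever $t,m,n\ge0$, $m<q^t$, $q^t\mid n$. For $l\ge0$, $S^lf(n)=f(q^ln)$. For $N\ge1$, $[N]=\{0,\dots,N-1\}$ and $\Pi(N)$ is the set of $\vec n=(n_0,\dots,n_s)\in\mathbb{Z}^{s+1}$ with $n_0+\omega_1n_1+\dots+\omega_sn_s\in[N]$ for all $\omega\in\{0,1\}^s$. With $\mathcal{C}$ complex conjugation and $|\omega|=\sum\omega_i$, $$A(f,\mathbf r,L)=\frac{1}{|\Pi(q^L)|}\sum_{\vec n\in\Pi(q^L)}\prod_{\omega\in\{0,1\}^s}\mathcal{C}^{|\omega|}f(n_0+\omega_1n_1+\dots+\omega_sn_s+r_\omega),$$ and the Gowers norm is $\|f\|_{U^s[N]}\ge0$ with $\|f\|_{U^s[N]}^{2^s}=\frac{1}{|\Pi(N)|}\sum_{\vec n\in\Pi(N)}\prod_{\omega}\mathcal{C}^{|\omega|}f(n_0+\omega_1n_1+\dots+\omega_sn_s)$ (so $A(f,\mathbf 0,L)=\|f\|_{U^s[q^L]}^{2^s}$). *)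

theory Defs
  imports Complex_Main
begin

text \<open>A vector (n_0,...,n_s) in Z^(s+1) is a function nat => int vanishing above s.
  A cube vertex omega in {0,1}^s is identified with the subset of {1..s} where omega_i = 1.\<close>

definition q_multiplicative :: "nat \<Rightarrow> (nat \<Rightarrow> complex) \<Rightarrow> bool" where
  "q_multiplicative q f \<longleftrightarrow>
     (\<forall>t m n. m < q ^ t \<and> q ^ t dvd n \<longrightarrow> f (m + n) = f m * f n)"

definition shiftS :: "nat \<Rightarrow> nat \<Rightarrow> (nat \<Rightarrow> complex) \<Rightarrow> nat \<Rightarrow> complex" where
  "shiftS q l f n = f (q ^ l * n)"

definition cube_form :: "(nat \<Rightarrow> int) \<Rightarrow> nat set \<Rightarrow> int" where
  "cube_form n \<omega> = n 0 + (\<Sum>i\<in>\<omega>. n i)"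

definition Pi_set :: "nat \<Rightarrow> nat \<Rightarrow> (nat \<Rightarrow> int) set" where
  "Pi_set s N = {n. (\<forall>i>s. n i = 0) \<and>
      (\<forall>\<omega>\<in>Pow {1..s}. 0 \<le> cube_form n \<omega> \<and> cube_form n \<omega> < int N)}"

definition conj_pow :: "nat \<Rightarrow> complex \<Rightarrow> complex" where
  "conj_pow k z = (if even k then z else cnj z)"

definition A_avg :: "nat \<Rightarrow> nat \<Rightarrow> (nat \<Rightarrow> complex) \<Rightarrow> (nat set \<Rightarrow> nat) \<Rightarrow> nat \<Rightarrow> complex" where
  "A_avg q s f r L =
     (\<Sum>n\<in>Pi_set s (q ^ L).
        \<Prod>\<omega>\<in>Pow {1..s}. conj_pow (card \<omega>) (f (nat (cube_form n \<omega>) + r \<omega>)))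
     / of_nat (card (Pi_set s (q ^ L)))"

definition gowers_avg :: "nat \<Rightarrow> nat \<Rightarrow> (nat \<Rightarrow> complex) \<Rightarrow> complex" where
  "gowers_avg s N f =
     (\<Sum>n\<in>Pi_set s N.
        \<Prod>\<omega>\<in>Pow {1..s}. conj_pow (card \<omega>) (f (nat (cube_form n \<omega>))))
     / of_nat (card (Pi_set s N))"

definition gowers_norm :: "nat \<Rightarrow> nat \<Rightarrow> (nat \<Rightarrow> complex) \<Rightarrow> real" where
  "gowers_norm s N f = cmod (gowers_avg s N f) powr (1 / 2 ^ s)"

end

theory Submission
  imports Defs "HOL-Library.FuncSet"
begin

text \<open>Write each parallelepiped as \<open>n = q\<^sup>l m + a\<close>, where \<open>a\<close> collects the lowest \<open>l\<close>
  digits of its vertices. By \<open>q\<close>-multiplicativity the sum behind \<open>A(f, r, L)\<close> becomes a sum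
  over \<open>a\<close> of unimodular weights times the corresponding sums for \<open>S\<^sup>l f\<close> over
  \<open>[q\<^bsup>L-l\<^esup>]\<close>, whose vertex offsets are the carries of \<open>a + r\<close>; these offsets stay
  bounded in terms of \<open>s\<close>, so the trivial bound propagates.
  A proportion at least \<open>\<kappa> = (2(s+1)\<^sup>2)\<^bsup>-(s+1)\<^esup>\<close> of the digit blocks \<open>a\<close> produces
  no carry at all. For these the inner sum has zero offsets, where by induction it is smaller by
  a factor \<open>1 - \<kappa>/2 \<epsilon>\<^bsub>i+1\<^esub>\<close>; and when the offsets are zero, their weights add up
  to the Gowers sum of \<open>S\<^bsup>K\<^sub>i\<^esup> f\<close> over \<open>[q\<^bsup>L\<^sub>i\<^esup>]\<close>, which is smaller by a factor
  \<open>1 - \<kappa>/2 \<epsilon>\<^sub>i\<close>. Iterating over the blocks \<open>[K\<^sub>i, K\<^bsub>i+1\<^esub>)\<close> gives the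
  product of the factors \<open>1 - \<kappa>\<^sup>2/2 \<epsilon>\<^sub>i\<close>, which is bounded by an exponential.\<close>

section \<open>Parallelepipeds with shifted vertices\<close>

definition unit_vertex :: "nat \<Rightarrow> nat set" where
  "unit_vertex i = (if i = 0 then {} else {i})"

lemma unit_vertex_in_cube: "i \<le> s \<Longrightarrow> unit_vertex i \<in> Pow {1..s}"
  by (auto simp: unit_vertex_def)

lemma cube_form_unit_vertex: "cube_form n (unit_vertex i) = (if i = 0 then n 0 else n 0 + n i)"
  by (simp add: cube_form_def unit_vertex_def)

lemma cube_form_affine: "cube_form (\<lambda>i. c * m i + a i) \<omega> = c * cube_form m \<omega> + cube_form a \<omega>"
  by (simp add: cube_form_def sum.distrib sum_distrib_left algebra_simps)

lemma card_bounded_by_unit_vertices: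
  assumes "\<And>n. n \<in> S \<Longrightarrow> (\<forall>i>s. n i = 0) \<and>
             (\<forall>i\<le>s. cube_form n (unit_vertex i) + e (unit_vertex i) \<in> {0..<int N})"
  shows "finite S" and "card S \<le> N ^ (s + 1)"
proof -
  define g where "g n = restrict (\<lambda>i. cube_form n (unit_vertex i) + e (unit_vertex i)) {0..s}" for n
  have "inj_on g S"
  proof (rule inj_onI)
    fix x y assume x: "x \<in> S" and y: "y \<in> S" and gxy: "g x = g y"
    have xy: "cube_form x (unit_vertex i) = cube_form y (unit_vertex i)" if "i \<le> s" for i
      using that fun_cong[OF gxy, of i] by (simp add: g_def)
    show "x = y"
    proof
      fix i
      show "x i = y i"
      proof (cases "i \<le> s")
        case True
        then show ?thesis
          using xy[of 0] xy[of i] by (simp add: cube_form_unit_vertex split: if_splits)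
      next
        case False
        then show ?thesis
          using assms[OF x] assms[OF y] by simp
      qed
    qed
  qed
  moreover have "g ` S \<subseteq> (\<Pi>\<^sub>E i\<in>{0..s}. {0..<int N})"
    using assms by (auto simp: g_def)
  moreover have "finite (\<Pi>\<^sub>E i\<in>{0..s}. {0..<int N})"
    by (simp add: finite_PiE)
  ultimately have "finite S" and "card S \<le> card (\<Pi>\<^sub>E i\<in>{0..s}. {0..<int N})"
    by (blast intro: inj_on_finite card_inj_on_le)+
  then show "finite S" and "card S \<le> N ^ (s + 1)"
    by (simp_all add: card_PiE)
qed

definition shifted_Pi :: "nat \<Rightarrow> (nat set \<Rightarrow> int) \<Rightarrow> nat \<Rightarrow> (nat \<Rightarrow> int) set" where
  "shifted_Pi s e N = {n. (\<forall>i>s. n i = 0) \<and>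
      (\<forall>\<omega>\<in>Pow {1..s}. 0 \<le> cube_form n \<omega> + e \<omega> \<and> cube_form n \<omega> + e \<omega> < int N)}"

lemma Pi_set_eq_shifted_Pi: "Pi_set s N = shifted_Pi s (\<lambda>_. 0) N"
  by (simp add: Pi_set_def shifted_Pi_def)

lemma shifted_Pi_cong: "(\<And>\<omega>. \<omega> \<in> Pow {1..s} \<Longrightarrow> e \<omega> = e' \<omega>) \<Longrightarrow> shifted_Pi s e N = shifted_Pi s e' N"
  by (simp add: shifted_Pi_def)

lemma shifted_Pi_unit_vertices:
  "n \<in> shifted_Pi s e N \<Longrightarrow> (\<forall>i>s. n i = 0) \<and>
     (\<forall>i\<le>s. cube_form n (unit_vertex i) + e (unit_vertex i) \<in> {0..<int N})"
  by (auto simp: shifted_Pi_def dest: unit_vertex_in_cube)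

lemma finite_shifted_Pi: "finite (shifted_Pi s e N)"
  by (rule card_bounded_by_unit_vertices(1)[OF shifted_Pi_unit_vertices])

lemma card_shifted_Pi_le: "card (shifted_Pi s e N) \<le> N ^ (s + 1)"
  by (rule card_bounded_by_unit_vertices(2)[OF shifted_Pi_unit_vertices])

lemma sum_cube_vertex_bounds:
  fixes p :: "nat \<Rightarrow> int"
  assumes "\<omega> \<in> Pow {1..s}" and "\<And>i. i \<in> \<omega> \<Longrightarrow> lo \<le> p i \<and> p i \<le> hi" and "lo \<le> 0" and "0 \<le> hi"
  shows "int s * lo \<le> (\<Sum>i\<in>\<omega>. p i) \<and> (\<Sum>i\<in>\<omega>. p i) \<le> int s * hi"
proof -
  have "card \<omega> \<le> s"
    using assms(1) card_mono[of "{1..s}" \<omega>] by auto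
  then have "int s * lo \<le> int (card \<omega>) * lo" and "int (card \<omega>) * hi \<le> int s * hi"
    using assms(3,4) by (simp_all add: mult_right_mono_neg mult_right_mono)
  moreover have "int (card \<omega>) * lo \<le> (\<Sum>i\<in>\<omega>. p i)" and "(\<Sum>i\<in>\<omega>. p i) \<le> int (card \<omega>) * hi"
    using assms(2) by (auto intro: sum_bounded_below sum_bounded_above)
  ultimately show ?thesis by linarith
qed

lemma card_shifted_Pi_const_ge_box:
  assumes k: "int (s + 1) * (int k - 1) < int D"
  shows "k ^ (s + 1) \<le> card (shifted_Pi s (\<lambda>_. c) D)"
proof -
  define emb where "emb p i = (if i = 0 then p 0 - c else if i \<le> s then p i else 0)" for p :: "nat \<Rightarrow> int" and i
  let ?B = "\<Pi>\<^sub>E i\<in>{0..s}. {0..<int k}"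
  have "inj_on emb ?B"
  proof (rule inj_onI)
    fix p p' assume "p \<in> ?B" "p' \<in> ?B" and eq: "emb p = emb p'"
    show "p = p'"
    proof (rule PiE_ext[OF \<open>p \<in> ?B\<close> \<open>p' \<in> ?B\<close>])
      fix i assume "i \<in> {0..s}"
      then show "p i = p' i" using fun_cong[OF eq, of i] by (auto simp: emb_def split: if_splits)
    qed
  qed
  moreover have "emb p \<in> shifted_Pi s (\<lambda>_. c) D" if p: "p \<in> ?B" for p
    unfolding shifted_Pi_def
  proof (intro CollectI conjI allI impI ballI)
    fix \<omega> assume \<omega>: "\<omega> \<in> Pow {1..s}"
    have p_range: "0 \<le> p i \<and> p i \<le> int k - 1" if "i \<le> s" for i
      using p that by auto
    then have "0 \<le> int k - 1"
      by fastforce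
    have "cube_form (emb p) \<omega> + c = p 0 + (\<Sum>i\<in>\<omega>. p i)"
      using \<omega> unfolding cube_form_def emb_def by (auto intro!: sum.cong)
    moreover have "int s * 0 \<le> (\<Sum>i\<in>\<omega>. p i) \<and> (\<Sum>i\<in>\<omega>. p i) \<le> int s * (int k - 1)"
      by (rule sum_cube_vertex_bounds[OF \<omega>]) (use \<omega> p_range \<open>0 \<le> int k - 1\<close> in auto)
    ultimately show "0 \<le> cube_form (emb p) \<omega> + c" and "cube_form (emb p) \<omega> + c < int D"
      using p_range[of 0] k by (simp_all add: algebra_simps)
  qed (simp add: emb_def)
  ultimately have "card ?B \<le> card (shifted_Pi s (\<lambda>_. c) D)"
    by (intro card_inj_on_le finite_shifted_Pi) auto
  then show ?thesis
    by (simp add: card_PiE)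
qed

lemma card_shifted_Pi_const_ge:
  assumes "1 \<le> D"
  shows "real D ^ (s + 1) \<le> real (s + 1) ^ (s + 1) * real (card (shifted_Pi s (\<lambda>_. c) D))"
proof -
  define j where "j = (D - 1) div (s + 1)"
  have "D - 1 = (s + 1) * j + (D - 1) mod (s + 1)"
    unfolding j_def by (rule mult_div_mod_eq[symmetric])
  moreover have "(D - 1) mod (s + 1) < s + 1"
    by simp
  moreover have "(s + 1) * (j + 1) = (s + 1) * j + (s + 1)"
    by simp
  ultimately have D_le: "D \<le> (s + 1) * (j + 1)" and "(s + 1) * j < D"
    using assms by linarith+
  then have "int (s + 1) * (int (j + 1) - 1) < int D"
    by (metis add_diff_cancel_right' of_nat_1 of_nat_add of_nat_less_iff of_nat_mult)
  then have box: "real (j + 1) ^ (s + 1) \<le> real (card (shifted_Pi s (\<lambda>_. c) D))"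
    by (metis card_shifted_Pi_const_ge_box of_nat_le_iff of_nat_power)
  have "real D \<le> real (s + 1) * real (j + 1)"
    using D_le by (metis of_nat_le_iff of_nat_mult)
  then have "real D ^ (s + 1) \<le> (real (s + 1) * real (j + 1)) ^ (s + 1)"
    by (rule power_mono) simp
  also have "\<dots> = real (s + 1) ^ (s + 1) * real (j + 1) ^ (s + 1)"
    by (rule power_mult_distrib)
  also have "\<dots> \<le> real (s + 1) ^ (s + 1) * real (card (shifted_Pi s (\<lambda>_. c) D))"
    using box by (rule mult_left_mono) simp
  finally show ?thesis .
qed

section \<open>Splitting off the lowest digits\<close>

definition digit_box :: "nat \<Rightarrow> nat \<Rightarrow> (nat \<Rightarrow> int) set" where
  "digit_box s Q = {a. (\<forall>i>s. a i = 0) \<and>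
      (\<forall>i\<le>s. 0 \<le> cube_form a (unit_vertex i) \<and> cube_form a (unit_vertex i) < int Q)}"

lemma finite_digit_box: "finite (digit_box s Q)"
  by (rule card_bounded_by_unit_vertices[where e = "\<lambda>_. 0" and N = Q]) (auto simp: digit_box_def)

definition digit_join :: "nat \<Rightarrow> (nat \<Rightarrow> int) \<Rightarrow> (nat \<Rightarrow> int) \<Rightarrow> nat \<Rightarrow> int" where
  "digit_join Q a m = (\<lambda>i. int Q * m i + a i)"

definition carry :: "nat \<Rightarrow> (nat \<Rightarrow> int) \<Rightarrow> (nat set \<Rightarrow> int) \<Rightarrow> nat set \<Rightarrow> int" where
  "carry Q a e \<omega> = (cube_form a \<omega> + e \<omega>) div int Q"

lemma affine_div_range:
  fixes Q x y N :: int
  assumes "0 < Q"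
  shows "(0 \<le> Q * x + y \<and> Q * x + y < Q * N) \<longleftrightarrow> (0 \<le> x + y div Q \<and> x + y div Q < N)"
proof -
  have "(Q * x + y - Q * N) div Q = (y + (x - N) * Q) div Q"
    by (rule arg_cong[where f = "\<lambda>z. z div Q"]) (simp add: algebra_simps)
  also have "\<dots> = x + y div Q - N"
    using assms by simp
  finally have "(Q * x + y - Q * N) div Q = x + y div Q - N" .
  moreover have "(Q * x + y) div Q = x + y div Q"
    using assms by simp
  ultimately show ?thesis
    using pos_imp_zdiv_nonneg_iff[OF assms, of "Q * x + y"]
      pos_imp_zdiv_neg_iff[OF assms, of "Q * x + y - Q * N"] by simp
qed

lemma digit_join_in_shifted_Pi_iff:
  assumes "0 < Q" and "a \<in> digit_box s Q"
  shows "digit_join Q a m \<in> shifted_Pi s e (Q * N) \<longleftrightarrow> m \<in> shifted_Pi s (carry Q a e) N"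
proof -
  have "(\<forall>i>s. digit_join Q a m i = 0) \<longleftrightarrow> (\<forall>i>s. m i = 0)"
    using assms by (simp add: digit_join_def digit_box_def)
  moreover have "(0 \<le> cube_form (digit_join Q a m) \<omega> + e \<omega> \<and> cube_form (digit_join Q a m) \<omega> + e \<omega> < int (Q * N))
      \<longleftrightarrow> (0 \<le> cube_form m \<omega> + carry Q a e \<omega> \<and> cube_form m \<omega> + carry Q a e \<omega> < int N)" for \<omega>
    using affine_div_range[of "int Q" "cube_form m \<omega>" "cube_form a \<omega> + e \<omega>" "int N"] assms(1)
    by (simp add: digit_join_def cube_form_affine carry_def add.assoc)
  ultimately show ?thesis by (simp add: shifted_Pi_def)
qed

text \<open>The inverse of \<open>digit_join\<close>: the residues of the vertices \<open>n 0\<close> and \<open>n 0 + n i\<close> modulo \<open>Q\<close>.\<close>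

definition low_digits :: "nat \<Rightarrow> nat \<Rightarrow> (nat \<Rightarrow> int) \<Rightarrow> nat \<Rightarrow> int" where
  "low_digits s Q n i =
     (if i = 0 then n 0 mod int Q else if i \<le> s then (n 0 + n i) mod int Q - n 0 mod int Q else 0)"

lemma low_digits_in_digit_box: "0 < Q \<Longrightarrow> low_digits s Q n \<in> digit_box s Q"
  by (auto simp: digit_box_def low_digits_def cube_form_unit_vertex)

lemma int_dvd_sub_low_digits:
  assumes "\<forall>i>s. n i = 0"
  shows "int Q dvd n i - low_digits s Q n i"
proof -
  have "int Q dvd (n 0 + n i - (n 0 + n i) mod int Q) - (n 0 - n 0 mod int Q)"
    by (intro dvd_diff dvd_minus_mod)
  then show ?thesis
    using assms by (auto simp: low_digits_def algebra_simps)
qed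

lemma low_digits_digit_join:
  assumes "a \<in> digit_box s Q"
  shows "low_digits s Q (digit_join Q a m) = a"
proof
  fix i
  have box: "0 \<le> cube_form a (unit_vertex j) \<and> cube_form a (unit_vertex j) < int Q" if "j \<le> s" for j
    using assms that by (simp add: digit_box_def)
  have "(int Q * m 0 + a 0) mod int Q = a 0"
    using box[of 0] by (simp add: cube_form_unit_vertex)
  moreover have "(int Q * m 0 + a 0 + (int Q * m i + a i)) mod int Q = a 0 + a i" if "i \<noteq> 0" "i \<le> s"
  proof -
    have "(int Q * m 0 + a 0 + (int Q * m i + a i)) mod int Q = (a 0 + a i + (m 0 + m i) * int Q) mod int Q"
      by (rule arg_cong[where f = "\<lambda>z. z mod int Q"]) (simp add: algebra_simps)
    then show ?thesis
      using box[of i] that by (simp add: cube_form_unit_vertex)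
  qed
  moreover have "a i = 0" if "s < i"
    using assms that by (simp add: digit_box_def)
  ultimately show "low_digits s Q (digit_join Q a m) i = a i"
    by (simp add: low_digits_def digit_join_def)
qed

lemma bij_betw_digit_join:
  assumes "0 < Q"
  shows "bij_betw (\<lambda>(a, m). digit_join Q a m)
           (SIGMA a:digit_box s Q. shifted_Pi s (carry Q a e) N) (shifted_Pi s e (Q * N))"
proof (rule bij_betw_imageI)
  show "inj_on (\<lambda>(a, m). digit_join Q a m) (SIGMA a:digit_box s Q. shifted_Pi s (carry Q a e) N)"
  proof (rule inj_onI, clarsimp)
    fix a m a' m'
    assume "a \<in> digit_box s Q" "a' \<in> digit_box s Q" and eq: "digit_join Q a m = digit_join Q a' m'"
    then have "a = a'" by (metis low_digits_digit_join)
    then show "a = a' \<and> m = m'"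
      using eq assms by (auto simp: digit_join_def fun_eq_iff)
  qed
  show "(\<lambda>(a, m). digit_join Q a m) ` (SIGMA a:digit_box s Q. shifted_Pi s (carry Q a e) N) = shifted_Pi s e (Q * N)"
  proof (intro equalityI subsetI)
    fix n assume n: "n \<in> shifted_Pi s e (Q * N)"
    define a where "a = low_digits s Q n"
    define m where "m i = (n i - a i) div int Q" for i
    have "n = digit_join Q a m"
      using int_dvd_sub_low_digits[of s n Q] n by (auto simp: digit_join_def m_def a_def shifted_Pi_def)
    moreover have a: "a \<in> digit_box s Q"
      unfolding a_def using assms by (rule low_digits_in_digit_box)
    ultimately have "m \<in> shifted_Pi s (carry Q a e) N"
      using n digit_join_in_shifted_Pi_iff[OF assms a] by simp
    with a have "(a, m) \<in> (SIGMA a:digit_box s Q. shifted_Pi s (carry Q a e) N)"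
      by simp
    then show "n \<in> (\<lambda>(a, m). digit_join Q a m) ` (SIGMA a:digit_box s Q. shifted_Pi s (carry Q a e) N)"
      unfolding \<open>n = digit_join Q a m\<close> by (rule rev_image_eqI) simp
  next
    fix n assume "n \<in> (\<lambda>(a, m). digit_join Q a m) ` (SIGMA a:digit_box s Q. shifted_Pi s (carry Q a e) N)"
    then obtain a m where a: "a \<in> digit_box s Q" and "m \<in> shifted_Pi s (carry Q a e) N"
      and "n = digit_join Q a m"
      by auto
    then show "n \<in> shifted_Pi s e (Q * N)"
      using digit_join_in_shifted_Pi_iff[OF assms a] by simp
  qed
qed

lemma card_shifted_Pi_mult:
  assumes "0 < Q"
  shows "card (shifted_Pi s e (Q * N)) = (\<Sum>a\<in>digit_box s Q. card (shifted_Pi s (carry Q a e) N))"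
proof -
  have "card (shifted_Pi s e (Q * N)) = card (SIGMA a:digit_box s Q. shifted_Pi s (carry Q a e) N)"
    using bij_betw_same_card[OF bij_betw_digit_join[OF assms]] by simp
  also have "\<dots> = (\<Sum>a\<in>digit_box s Q. card (shifted_Pi s (carry Q a e) N))"
    by (rule card_SigmaI) (simp_all add: finite_digit_box finite_shifted_Pi)
  finally show ?thesis .
qed

lemma q_multiplicative_split:
  assumes "q_multiplicative q f" and "m < q ^ l"
  shows "f (m + q ^ l * x) = f m * shiftS q l f x"
proof -
  have "q ^ l dvd q ^ l * x" by simp
  then show ?thesis using assms unfolding q_multiplicative_def shiftS_def by blast
qed

lemma q_multiplicative_shiftS:
  assumes "q_multiplicative q f" and "0 < q"
  shows "q_multiplicative q (shiftS q l f)"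
  unfolding q_multiplicative_def
proof (intro allI impI)
  fix t m n assume "m < q ^ t \<and> q ^ t dvd n"
  then have "q ^ l * m < q ^ (l + t)" and "q ^ (l + t) dvd q ^ l * n"
    using assms(2) by (simp_all add: power_add)
  then have "f (q ^ l * m + q ^ l * n) = f (q ^ l * m) * f (q ^ l * n)"
    using assms(1) unfolding q_multiplicative_def by blast
  then show "shiftS q l f (m + n) = shiftS q l f m * shiftS q l f n"
    by (simp add: shiftS_def distrib_left)
qed

lemma shiftS_shiftS: "shiftS q a (shiftS q b f) = shiftS q (a + b) f"
  by (simp add: shiftS_def power_add ac_simps fun_eq_iff)

lemma shiftS_0 [simp]: "shiftS q 0 f = f"
  by (simp add: shiftS_def fun_eq_iff)

text \<open>The offset \<open>d\<close> shifts the arguments of \<open>f\<close>, the offset \<open>e\<close> only the range of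
  the parallelepipeds; \<open>A(f, r, L)\<close> is the case \<open>d = r\<close>, \<open>e = 0\<close>.\<close>

definition shifted_cube_sum ::
    "nat \<Rightarrow> (nat \<Rightarrow> complex) \<Rightarrow> (nat set \<Rightarrow> int) \<Rightarrow> (nat set \<Rightarrow> int) \<Rightarrow> nat \<Rightarrow> complex" where
  "shifted_cube_sum s f d e N =
     (\<Sum>n\<in>shifted_Pi s e N. \<Prod>\<omega>\<in>Pow {1..s}. conj_pow (card \<omega>) (f (nat (cube_form n \<omega> + d \<omega>))))"

lemma shifted_cube_sum_cong:
  assumes "\<And>\<omega>. \<omega> \<in> Pow {1..s} \<Longrightarrow> d \<omega> = d' \<omega> \<and> e \<omega> = e' \<omega>"
  shows "shifted_cube_sum s f d e N = shifted_cube_sum s f d' e' N"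
proof -
  have "shifted_Pi s e N = shifted_Pi s e' N"
    using assms by (intro shifted_Pi_cong) blast
  then show ?thesis
    unfolding shifted_cube_sum_def using assms by (intro sum.cong prod.cong refl) auto
qed

lemma norm_conj_pow [simp]: "cmod (conj_pow k z) = cmod z"
  by (simp add: conj_pow_def)

lemma norm_shifted_cube_sum_le:
  assumes "\<And>n. cmod (f n) = 1"
  shows "cmod (shifted_cube_sum s f d e N) \<le> card (shifted_Pi s e N)"
proof -
  have "cmod (shifted_cube_sum s f d e N) \<le>
      (\<Sum>n\<in>shifted_Pi s e N. cmod (\<Prod>\<omega>\<in>Pow {1..s}. conj_pow (card \<omega>) (f (nat (cube_form n \<omega> + d \<omega>)))))"
    unfolding shifted_cube_sum_def by (rule norm_sum)
  also have "\<dots> = card (shifted_Pi s e N)"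
    by (simp add: prod_norm[symmetric] assms)
  finally show ?thesis .
qed

definition digit_weight :: "nat \<Rightarrow> (nat \<Rightarrow> complex) \<Rightarrow> (nat set \<Rightarrow> int) \<Rightarrow> nat \<Rightarrow> (nat \<Rightarrow> int) \<Rightarrow> complex" where
  "digit_weight s f d Q a =
     (\<Prod>\<omega>\<in>Pow {1..s}. conj_pow (card \<omega>) (f (nat ((cube_form a \<omega> + d \<omega>) mod int Q))))"

lemma norm_digit_weight:
  assumes "\<And>n. cmod (f n) = 1"
  shows "cmod (digit_weight s f d Q a) = 1"
  by (simp add: digit_weight_def prod_norm[symmetric] assms)

lemma cube_form_digit_join:
  "cube_form (digit_join Q a m) \<omega> + d \<omega> =
     int Q * (cube_form m \<omega> + carry Q a d \<omega>) + (cube_form a \<omega> + d \<omega>) mod int Q"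
  using mult_div_mod_eq[of "int Q" "cube_form a \<omega> + d \<omega>"]
  unfolding digit_join_def carry_def cube_form_affine by (simp add: distrib_left)

lemma q_multiplicative_digit_join:
  assumes f: "q_multiplicative q f" and "0 < q"
    and nonneg: "0 \<le> cube_form m \<omega> + carry (q ^ l) a d \<omega>"
  shows "f (nat (cube_form (digit_join (q ^ l) a m) \<omega> + d \<omega>)) =
     f (nat ((cube_form a \<omega> + d \<omega>) mod int (q ^ l))) *
     shiftS q l f (nat (cube_form m \<omega> + carry (q ^ l) a d \<omega>))"
proof -
  define r where "r = (cube_form a \<omega> + d \<omega>) mod int (q ^ l)"
  define z where "z = cube_form m \<omega> + carry (q ^ l) a d \<omega>"
  have r: "0 \<le> r" "nat r < q ^ l"
    using \<open>0 < q\<close> by (simp_all add: r_def nat_less_iff)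
  have "nat (cube_form (digit_join (q ^ l) a m) \<omega> + d \<omega>) = nat r + q ^ l * nat z"
    using cube_form_digit_join[of "q ^ l" a m \<omega> d] nonneg r
    by (simp add: r_def z_def nat_add_distrib nat_mult_distrib nat_power_eq)
  then show ?thesis
    using q_multiplicative_split[OF f r(2)] by (simp add: r_def z_def)
qed

lemma shifted_cube_sum_mult:
  assumes f: "q_multiplicative q f" and "0 < q" and ed: "\<And>\<omega>. \<omega> \<in> Pow {1..s} \<Longrightarrow> e \<omega> \<le> d \<omega>"
  shows "shifted_cube_sum s f d e (q ^ l * N) =
    (\<Sum>a\<in>digit_box s (q ^ l). digit_weight s f d (q ^ l) a *
       shifted_cube_sum s (shiftS q l f) (carry (q ^ l) a d) (carry (q ^ l) a e) N)"
proof -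
  let ?Q = "q ^ l"
  let ?g = "\<lambda>f d n. \<Prod>\<omega>\<in>Pow {1..s}. conj_pow (card \<omega>) (f (nat (cube_form n \<omega> + d \<omega>)))"
  have Q: "0 < ?Q" using \<open>0 < q\<close> by simp
  have "shifted_cube_sum s f d e (?Q * N) =
      (\<Sum>(a, m)\<in>(SIGMA a:digit_box s ?Q. shifted_Pi s (carry ?Q a e) N). ?g f d (digit_join ?Q a m))"
    unfolding shifted_cube_sum_def
    by (subst sum.reindex_bij_betw[OF bij_betw_digit_join[OF Q], symmetric]) (simp add: split_def)
  also have "\<dots> = (\<Sum>a\<in>digit_box s ?Q. \<Sum>m\<in>shifted_Pi s (carry ?Q a e) N. ?g f d (digit_join ?Q a m))"
    by (rule sum.Sigma[symmetric]) (simp_all add: finite_digit_box finite_shifted_Pi)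
  also have "\<dots> = (\<Sum>a\<in>digit_box s ?Q. \<Sum>m\<in>shifted_Pi s (carry ?Q a e) N.
                    digit_weight s f d ?Q a * ?g (shiftS q l f) (carry ?Q a d) m)"
  proof (intro sum.cong refl)
    fix a m assume m: "m \<in> shifted_Pi s (carry ?Q a e) N"
    have "0 \<le> cube_form m \<omega> + carry ?Q a d \<omega>" if "\<omega> \<in> Pow {1..s}" for \<omega>
    proof -
      have "carry ?Q a e \<omega> \<le> carry ?Q a d \<omega>"
        unfolding carry_def using ed[OF that] Q by (simp add: zdiv_mono1)
      moreover have "0 \<le> cube_form m \<omega> + carry ?Q a e \<omega>"
        using m that by (simp add: shifted_Pi_def)
      ultimately show ?thesis by linarith
    qed
    then show "?g f d (digit_join ?Q a m) = digit_weight s f d ?Q a * ?g (shiftS q l f) (carry ?Q a d) m"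
      unfolding digit_weight_def prod.distrib[symmetric]
      by (intro prod.cong refl) (simp add: q_multiplicative_digit_join[OF f \<open>0 < q\<close>] conj_pow_def)
  qed
  finally show ?thesis
    by (simp add: shifted_cube_sum_def sum_distrib_left)
qed

section \<open>Carries\<close>

lemma int_div_range:
  fixes Q x lo hi :: int
  assumes "0 < Q" and "Q * lo \<le> x" and "x < Q * hi"
  shows "lo \<le> x div Q \<and> x div Q < hi"
  using affine_div_range[OF assms(1), of "- lo" x "hi - lo"] assms(2,3)
  by (simp add: algebra_simps)

definition admissible_offsets :: "nat \<Rightarrow> (nat set \<Rightarrow> int) \<Rightarrow> (nat set \<Rightarrow> int) \<Rightarrow> bool" where
  "admissible_offsets s d e \<longleftrightarrow>
     (\<forall>\<omega>\<in>Pow {1..s}. - int s \<le> e \<omega> \<and> e \<omega> \<le> int s \<and> e \<omega> \<le> d \<omega> \<and> d \<omega> \<le> e \<omega> + int s)"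

definition carry_free :: "nat \<Rightarrow> nat \<Rightarrow> (nat set \<Rightarrow> int) \<Rightarrow> (nat set \<Rightarrow> int) \<Rightarrow> (nat \<Rightarrow> int) set" where
  "carry_free s Q d e = {a \<in> digit_box s Q. \<forall>\<omega>\<in>Pow {1..s}. carry Q a d \<omega> = 0 \<and> carry Q a e \<omega> = 0}"

lemma finite_carry_free: "finite (carry_free s Q d e)"
  unfolding carry_free_def using finite_digit_box by simp

text \<open>The parallelepipeds with all vertices in \<open>[s, Q - 2s)\<close> produce no carry.\<close>

lemma shifted_Pi_subset_carry_free:
  assumes "admissible_offsets s d e" and "3 * s \<le> Q"
  shows "shifted_Pi s (\<lambda>_. - int s) (Q - 3 * s) \<subseteq> carry_free s Q d e"
proof
  fix a assume a: "a \<in> shifted_Pi s (\<lambda>_. - int s) (Q - 3 * s)"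
  have range: "int s \<le> cube_form a \<omega> \<and> cube_form a \<omega> < int Q - 2 * int s"
    if "\<omega> \<in> Pow {1..s}" for \<omega>
  proof -
    have "0 \<le> cube_form a \<omega> + - int s \<and> cube_form a \<omega> + - int s < int (Q - 3 * s)"
      using a that unfolding shifted_Pi_def by blast
    moreover have "int (Q - 3 * s) = int Q - 3 * int s"
      using assms(2) by (simp add: of_nat_diff)
    ultimately show ?thesis by linarith
  qed
  have "a \<in> digit_box s Q"
    unfolding digit_box_def
  proof (intro CollectI conjI allI impI)
    fix i assume "i \<le> s"
    then have "unit_vertex i \<in> Pow {1..s}"
      by (rule unit_vertex_in_cube)
    from range[OF this] show "0 \<le> cube_form a (unit_vertex i)" and "cube_form a (unit_vertex i) < int Q"
      by linarith+
  qed (use a in \<open>simp add: shifted_Pi_def\<close>)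
  moreover have "carry Q a d \<omega> = 0 \<and> carry Q a e \<omega> = 0" if "\<omega> \<in> Pow {1..s}" for \<omega>
  proof -
    have "- int s \<le> e \<omega>" "e \<omega> \<le> int s" "e \<omega> \<le> d \<omega>" "d \<omega> \<le> e \<omega> + int s"
      using assms(1) that by (simp_all add: admissible_offsets_def)
    then show ?thesis
      using range[OF that] by (simp add: carry_def zdiv_eq_0_iff)
  qed
  ultimately show "a \<in> carry_free s Q d e"
    by (simp add: carry_free_def)
qed

lemma card_carry_free_ge:
  assumes "admissible_offsets s d e" and "1 \<le> s" and "6 * s \<le> Q"
  shows "real Q ^ (s + 1) \<le> real (2 * (s + 1)) ^ (s + 1) * real (card (carry_free s Q d e))"
proof -
  define D where "D = Q - 3 * s"
  have "1 \<le> D" and "real Q \<le> 2 * real D"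
    using assms(2,3) by (simp_all add: D_def)
  then have "real Q ^ (s + 1) \<le> (2 * real D) ^ (s + 1)"
    by (intro power_mono) auto
  also have "\<dots> = 2 ^ (s + 1) * real D ^ (s + 1)"
    by (rule power_mult_distrib)
  also have "\<dots> \<le> 2 ^ (s + 1) * (real (s + 1) ^ (s + 1) * real (card (shifted_Pi s (\<lambda>_. - int s) D)))"
    using card_shifted_Pi_const_ge[OF \<open>1 \<le> D\<close>] by (rule mult_left_mono) simp
  also have "\<dots> \<le> 2 ^ (s + 1) * (real (s + 1) ^ (s + 1) * real (card (carry_free s Q d e)))"
    using card_mono[OF finite_carry_free shifted_Pi_subset_carry_free[OF assms(1)]] assms(3)
    by (intro mult_left_mono) (simp_all add: D_def)
  also have "\<dots> = real (2 * (s + 1)) ^ (s + 1) * real (card (carry_free s Q d e))"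
    unfolding of_nat_mult power_mult_distrib by (simp only: mult_ac of_nat_numeral)
  finally show ?thesis .
qed

definition carry_free_density :: "nat \<Rightarrow> real" where
  "carry_free_density s = 1 / real (2 * (s + 1) * (s + 1)) ^ (s + 1)"

lemma carry_free_density_pos: "0 < carry_free_density s"
proof -
  have "0 < real (2 * (s + 1) * (s + 1))"
    by (simp only: of_nat_0_less_iff) simp
  then show ?thesis
    using zero_less_power[of "real (2 * (s + 1) * (s + 1))" "s + 1"]
    unfolding carry_free_density_def by simp
qed

lemma carry_free_density_le_1: "carry_free_density s \<le> 1"
proof -
  have "1 \<le> real (2 * (s + 1) * (s + 1)) ^ (s + 1)"
    by (intro one_le_power) simp
  then show ?thesis
    by (simp add: carry_free_density_def)
qed

lemma carry_free_mass:
  assumes "admissible_offsets s d e" and "1 \<le> s" and "6 * s \<le> Q" and "1 \<le> N"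
  shows "carry_free_density s * real (card (shifted_Pi s e (Q * N))) \<le>
           real (card (carry_free s Q d e)) * real (card (shifted_Pi s (\<lambda>_. 0) N))"
proof -
  let ?K = "real (2 * (s + 1) * (s + 1)) ^ (s + 1)"
  have "0 < real (2 * (s + 1) * (s + 1))"
    by (simp only: of_nat_0_less_iff) simp
  then have K: "?K \<noteq> 0"
    using zero_less_power[of "real (2 * (s + 1) * (s + 1))" "s + 1"] by linarith
  have "real (card (shifted_Pi s e (Q * N))) \<le> real Q ^ (s + 1) * real N ^ (s + 1)"
    using card_shifted_Pi_le[of s e "Q * N"]
    by (metis of_nat_le_iff of_nat_mult of_nat_power power_mult_distrib)
  also have "\<dots> \<le> (real (2 * (s + 1)) ^ (s + 1) * real (card (carry_free s Q d e))) *
                  (real (s + 1) ^ (s + 1) * real (card (shifted_Pi s (\<lambda>_. 0) N)))"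
    using card_carry_free_ge[OF assms(1-3)] card_shifted_Pi_const_ge[OF assms(4), of s 0]
    by (intro mult_mono) simp_all
  also have "\<dots> = ?K * (real (card (carry_free s Q d e)) * real (card (shifted_Pi s (\<lambda>_. 0) N)))"
    unfolding of_nat_mult power_mult_distrib by (simp only: mult_ac)
  finally have "carry_free_density s * real (card (shifted_Pi s e (Q * N))) \<le>
      carry_free_density s * (?K * (real (card (carry_free s Q d e)) * real (card (shifted_Pi s (\<lambda>_. 0) N))))"
    using carry_free_density_pos[of s] by (intro mult_left_mono) simp_all
  also have "\<dots> = real (card (carry_free s Q d e)) * real (card (shifted_Pi s (\<lambda>_. 0) N))"
    using K unfolding carry_free_density_def by simp
  finally show ?thesis .
qed

lemma cube_form_digit_box_bounds:
  assumes "a \<in> digit_box s Q" and \<omega>: "\<omega> \<in> Pow {1..s}"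
  shows "- int s * (int Q - 1) \<le> cube_form a \<omega> \<and> cube_form a \<omega> \<le> (int s + 1) * (int Q - 1)"
proof -
  have box: "0 \<le> cube_form a (unit_vertex i) \<and> cube_form a (unit_vertex i) \<le> int Q - 1" if "i \<le> s" for i
    using assms(1) that by (simp add: digit_box_def)
  have a0: "0 \<le> a 0" "a 0 \<le> int Q - 1"
    using box[of 0] by (simp_all add: cube_form_unit_vertex)
  have "- (int Q - 1) \<le> a i \<and> a i \<le> int Q - 1" if "i \<in> \<omega>" for i
  proof -
    have "1 \<le> i" "i \<le> s" using \<omega> that by auto
    then have "0 \<le> a 0 + a i \<and> a 0 + a i \<le> int Q - 1"
      using box[of i] by (simp add: cube_form_unit_vertex)
    then show ?thesis using a0 by linarith
  qed
  then have "int s * - (int Q - 1) \<le> (\<Sum>i\<in>\<omega>. a i) \<and> (\<Sum>i\<in>\<omega>. a i) \<le> int s * (int Q - 1)"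
    using a0 by (intro sum_cube_vertex_bounds[OF \<omega>]) auto
  then show ?thesis
    using a0 by (simp add: cube_form_def algebra_simps)
qed

lemma admissible_offsets_carry:
  assumes "admissible_offsets s d e" and "a \<in> digit_box s Q" and "1 \<le> s" and "s < Q"
  shows "admissible_offsets s (carry Q a d) (carry Q a e)"
  unfolding admissible_offsets_def
proof
  fix \<omega> assume \<omega>: "\<omega> \<in> Pow {1..s}"
  let ?x = "cube_form a \<omega>"
  have Q: "0 < int Q" using assms(4) by simp
  have off: "- int s \<le> e \<omega>" "e \<omega> \<le> int s" "e \<omega> \<le> d \<omega>" "d \<omega> \<le> e \<omega> + int s"
    using assms(1) \<omega> by (simp_all add: admissible_offsets_def)
  have x: "- int s * (int Q - 1) \<le> ?x" "?x \<le> (int s + 1) * (int Q - 1)"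
    using cube_form_digit_box_bounds[OF assms(2) \<omega>] by simp_all
  have "- int s \<le> carry Q a e \<omega> \<and> carry Q a e \<omega> < int s + 1"
    unfolding carry_def using x off by (intro int_div_range[OF Q]) (simp_all add: algebra_simps)
  moreover have "carry Q a e \<omega> \<le> carry Q a d \<omega>"
    unfolding carry_def using off Q by (intro zdiv_mono1) simp_all
  moreover have "carry Q a d \<omega> \<le> carry Q a e \<omega> + 1"
  proof -
    have "(?x + d \<omega>) div int Q \<le> (?x + e \<omega> + int Q) div int Q"
      using off assms(4) Q by (intro zdiv_mono1) simp_all
    then show ?thesis
      using Q by (simp add: carry_def)
  qed
  ultimately show "- int s \<le> carry Q a e \<omega> \<and> carry Q a e \<omega> \<le> int s \<and>
      carry Q a e \<omega> \<le> carry Q a d \<omega> \<and> carry Q a d \<omega> \<le> carry Q a e \<omega> + int s"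
    using assms(3) by linarith
qed

lemma carry_free_zero_offsets:
  assumes "0 < Q" and zero: "\<And>\<omega>. \<omega> \<in> Pow {1..s} \<Longrightarrow> d \<omega> = 0 \<and> e \<omega> = 0"
  shows "carry_free s Q d e = Pi_set s Q"
proof -
  have carry_zero: "carry Q a d \<omega> = 0 \<and> carry Q a e \<omega> = 0 \<longleftrightarrow> 0 \<le> cube_form a \<omega> \<and> cube_form a \<omega> < int Q"
    if "\<omega> \<in> Pow {1..s}" for a \<omega>
    using zero[OF that] assms(1) by (auto simp: carry_def zdiv_eq_0_iff)
  show ?thesis
  proof (intro equalityI subsetI)
    fix a assume "a \<in> carry_free s Q d e"
    then have "\<forall>i>s. a i = 0" and "\<forall>\<omega>\<in>Pow {1..s}. carry Q a d \<omega> = 0 \<and> carry Q a e \<omega> = 0"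
      by (simp_all add: carry_free_def digit_box_def)
    then show "a \<in> Pi_set s Q"
      using carry_zero by (simp add: Pi_set_def)
  next
    fix a assume a: "a \<in> Pi_set s Q"
    then have "a \<in> digit_box s Q"
      using unit_vertex_in_cube unfolding Pi_set_def digit_box_def by blast
    moreover have "\<forall>\<omega>\<in>Pow {1..s}. carry Q a d \<omega> = 0 \<and> carry Q a e \<omega> = 0"
      using a carry_zero by (simp add: Pi_set_def)
    ultimately show "a \<in> carry_free s Q d e"
      by (simp add: carry_free_def)
  qed
qed

lemma carry_free_carries:
  assumes "a \<in> carry_free s Q d e"
  shows "shifted_cube_sum s g (carry Q a d) (carry Q a e) N = shifted_cube_sum s g (\<lambda>_. 0) (\<lambda>_. 0) N"
    and "shifted_Pi s (carry Q a e) N = shifted_Pi s (\<lambda>_. 0) N"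
  using assms by (intro shifted_cube_sum_cong shifted_Pi_cong; simp add: carry_free_def)+

lemma sum_digit_weight_zero_offsets:
  "(\<Sum>a\<in>Pi_set s Q. digit_weight s f (\<lambda>_. 0) Q a) = shifted_cube_sum s f (\<lambda>_. 0) (\<lambda>_. 0) Q"
  unfolding shifted_cube_sum_def digit_weight_def Pi_set_eq_shifted_Pi
proof (intro sum.cong prod.cong refl)
  fix a \<omega> assume "a \<in> shifted_Pi s (\<lambda>_. 0) Q" and "\<omega> \<in> Pow {1..s}"
  then have "(cube_form a \<omega> + 0) mod int Q = cube_form a \<omega> + 0"
    by (simp add: shifted_Pi_def)
  then show "conj_pow (card \<omega>) (f (nat ((cube_form a \<omega> + 0) mod int Q))) =
      conj_pow (card \<omega>) (f (nat (cube_form a \<omega> + 0)))"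
    by simp
qed

section \<open>One step of the recursion\<close>

lemma norm_shifted_cube_sum_zero_offsets_le:
  assumes "\<And>n. cmod (f n) = 1" and "gowers_norm s N f \<le> 1 - \<epsilon>"
  shows "cmod (shifted_cube_sum s f (\<lambda>_. 0) (\<lambda>_. 0) N) \<le> real (card (Pi_set s N)) * (1 - \<epsilon>)"
proof -
  let ?S = "shifted_cube_sum s f (\<lambda>_. 0) (\<lambda>_. 0) N" and ?c = "real (card (Pi_set s N))"
  have avg: "gowers_avg s N f = ?S / of_nat (card (Pi_set s N))"
    by (simp add: gowers_avg_def shifted_cube_sum_def Pi_set_eq_shifted_Pi)
  have S_le: "cmod ?S \<le> ?c"
    using norm_shifted_cube_sum_le[OF assms(1)] by (simp add: Pi_set_eq_shifted_Pi)
  show ?thesis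
  proof (cases "card (Pi_set s N) = 0")
    case True
    then show ?thesis using S_le by simp
  next
    case False
    define x where "x = cmod (gowers_avg s N f)"
    have "x = cmod ?S / ?c"
      by (simp add: x_def avg norm_divide)
    then have S_eq: "cmod ?S = ?c * x" and x: "0 \<le> x" "x \<le> 1"
      using False S_le by (simp_all add: divide_le_eq_1)
    have "x = x powr 1" using x by simp
    also have "\<dots> \<le> x powr (1 / 2 ^ s)"
      using x by (intro powr_mono') simp_all
    also have "\<dots> = gowers_norm s N f"
      by (simp add: x_def gowers_norm_def)
    finally have "x \<le> 1 - \<epsilon>" using assms(2) by linarith
    then show ?thesis
      unfolding S_eq by (intro mult_left_mono) simp_all
  qed
qed

lemma norm_sum_le_with_saving:
  fixes Z :: "'a \<Rightarrow> complex" and p :: "'a \<Rightarrow> real"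
  assumes "finite F" and "C \<subseteq> F"
    and Z: "\<And>a. a \<in> F \<Longrightarrow> cmod (Z a) \<le> p a * G"
    and ZC: "\<And>a. a \<in> C \<Longrightarrow> cmod (Z a) \<le> p a * G * (1 - t)"
    and mass: "\<kappa> * (\<Sum>a\<in>F. p a) \<le> (\<Sum>a\<in>C. p a)"
    and "0 \<le> G" and "0 \<le> t"
  shows "cmod (\<Sum>a\<in>F. Z a) \<le> (\<Sum>a\<in>F. p a) * G * (1 - \<kappa> * t)"
proof -
  have "cmod (\<Sum>a\<in>F. Z a) \<le> (\<Sum>a\<in>F. cmod (Z a))"
    by (rule norm_sum)
  also have "\<dots> = (\<Sum>a\<in>F - C. cmod (Z a)) + (\<Sum>a\<in>C. cmod (Z a))"
    using assms(2,1) by (rule sum.subset_diff)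
  also have "\<dots> \<le> (\<Sum>a\<in>F - C. p a * G) + (\<Sum>a\<in>C. p a * G * (1 - t))"
    using Z ZC assms(2) by (intro add_mono sum_mono) auto
  also have "\<dots> = (\<Sum>a\<in>F - C. p a) * G + (\<Sum>a\<in>C. p a) * G * (1 - t)"
    by (simp only: sum_distrib_right)
  also have "\<dots> = (\<Sum>a\<in>F. p a) * G - t * G * (\<Sum>a\<in>C. p a)"
    using sum.subset_diff[OF assms(2,1), of p] by (simp add: algebra_simps)
  also have "\<dots> \<le> (\<Sum>a\<in>F. p a) * G - t * G * (\<kappa> * (\<Sum>a\<in>F. p a))"
    using mass assms(6,7) by (simp add: mult_left_mono)
  finally show ?thesis
    by (simp add: algebra_simps)
qed

lemma saving_factors_le:
  fixes \<kappa> t \<epsilon> :: real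
  assumes "0 \<le> \<kappa>" and "0 \<le> \<epsilon>" and "0 \<le> t" and "t \<le> 1 / 2"
  shows "1 - \<kappa> * (t + \<epsilon> * (1 - t)) \<le> (1 - \<kappa> / 2 * \<epsilon>) * (1 - \<kappa> * t)"
proof -
  have "(1 - \<kappa> / 2 * \<epsilon>) * (1 - \<kappa> * t) - (1 - \<kappa> * (t + \<epsilon> * (1 - t))) =
      \<kappa> * \<epsilon> * (1 / 2 - t + \<kappa> * t / 2)"
    by (simp add: field_simps)
  moreover have "0 \<le> 1 / 2 - t + \<kappa> * t / 2"
    using assms mult_nonneg_nonneg[of \<kappa> t] by linarith
  then have "0 \<le> \<kappa> * \<epsilon> * (1 / 2 - t + \<kappa> * t / 2)"
    using assms by simp
  ultimately show ?thesis
    by linarith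
qed

text \<open>On \<open>C\<close> all the \<open>Z a\<close> share the factor \<open>Y0\<close>, so the weights \<open>W a\<close> can be
  summed first and their cancellation is not lost.\<close>

lemma norm_sum_le_with_cancellation:
  fixes Z W :: "'a \<Rightarrow> complex" and p :: "'a \<Rightarrow> real"
  assumes "finite F" and "C \<subseteq> F"
    and Z: "\<And>a. a \<in> F \<Longrightarrow> cmod (Z a) \<le> p a * G"
    and ZC: "\<And>a. a \<in> C \<Longrightarrow> p a = p0 \<and> Z a = W a * Y0"
    and Y0: "cmod Y0 \<le> p0 * G * (1 - t)"
    and WC: "cmod (\<Sum>a\<in>C. W a) \<le> real (card C) * (1 - \<epsilon>)"
    and mass: "\<kappa> * (\<Sum>a\<in>F. p a) \<le> real (card C) * p0"
    and "0 \<le> (\<Sum>a\<in>F. p a)" and "0 \<le> p0" and "0 \<le> G"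
    and "0 \<le> t" and "t \<le> 1 / 2" and "0 \<le> \<epsilon>" and "0 \<le> \<kappa>"
  shows "cmod (\<Sum>a\<in>F. Z a) \<le> (\<Sum>a\<in>F. p a) * G * ((1 - \<kappa> / 2 * \<epsilon>) * (1 - \<kappa> * t))"
proof -
  define P where "P = (\<Sum>a\<in>F. p a)"
  define u where "u = t + \<epsilon> * (1 - t)"
  have "0 \<le> u"
    using assms(11-13) by (simp add: u_def)
  have "(\<Sum>a\<in>F. Z a) = (\<Sum>a\<in>F - C. Z a) + Y0 * (\<Sum>a\<in>C. W a)"
    using sum.subset_diff[OF assms(2,1), of Z] ZC
    by (simp add: sum_distrib_left mult.commute)
  then have "cmod (\<Sum>a\<in>F. Z a) \<le> cmod (\<Sum>a\<in>F - C. Z a) + cmod Y0 * cmod (\<Sum>a\<in>C. W a)"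
    by (simp add: norm_triangle_ineq flip: norm_mult)
  also have "cmod (\<Sum>a\<in>F - C. Z a) \<le> (\<Sum>a\<in>F - C. p a * G)"
    using Z by (intro sum_norm_le) auto
  also have "cmod Y0 * cmod (\<Sum>a\<in>C. W a) \<le> (p0 * G * (1 - t)) * (real (card C) * (1 - \<epsilon>))"
    using Y0 WC assms(9-12) by (intro mult_mono) simp_all
  also have "(\<Sum>a\<in>F - C. p a * G) = P * G - real (card C) * p0 * G"
  proof -
    have "(\<Sum>a\<in>C. p a) = real (card C) * p0"
      using ZC by simp
    then show ?thesis
      using sum.subset_diff[OF assms(2,1), of p]
      by (simp add: P_def algebra_simps sum_distrib_left)
  qed
  finally have "cmod (\<Sum>a\<in>F. Z a) \<le> P * G - real (card C) * p0 * G * u"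
    by (simp add: u_def algebra_simps)
  also have "\<dots> \<le> P * G * (1 - \<kappa> * u)"
    using mult_right_mono[OF mass, of "G * u"] \<open>0 \<le> u\<close> assms(10)
    by (simp add: P_def algebra_simps)
  also have "\<dots> \<le> P * G * ((1 - \<kappa> / 2 * \<epsilon>) * (1 - \<kappa> * t))"
    unfolding u_def using saving_factors_le[of \<kappa> \<epsilon> t] assms(8,10-14)
    by (intro mult_left_mono) (simp_all add: P_def)
  finally show ?thesis
    by (simp add: P_def)
qed

text \<open>The hypotheses bound the sums of \<open>S\<^sup>l f\<close> one level down:
  \<open>G\<close> is the bound obtained so far and \<open>t\<close> the extra saving available for zero offsets.\<close>

locale carry_step =
  fixes q s l N :: nat and f :: "nat \<Rightarrow> complex" and G t :: real
  assumes unimodular: "\<And>n. cmod (f n) = 1"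
    and q_mult: "q_multiplicative q f"
    and s_pos: "1 \<le> s" and digits_large: "6 * s \<le> q ^ l" and N_pos: "1 \<le> N"
    and G_nonneg: "0 \<le> G" and t_nonneg: "0 \<le> t" and t_le: "t \<le> 1 / 2"
    and sub_bound: "\<And>d e. admissible_offsets s d e \<Longrightarrow>
          cmod (shifted_cube_sum s (shiftS q l f) d e N) \<le> card (shifted_Pi s e N) * G"
    and sub_bound_zero: "cmod (shifted_cube_sum s (shiftS q l f) (\<lambda>_. 0) (\<lambda>_. 0) N) \<le>
          card (shifted_Pi s (\<lambda>_. 0) N) * G * (1 - t)"
begin

lemma q_pos: "0 < q"
proof (rule ccontr)
  assume "\<not> 0 < q"
  then have "q ^ l \<le> 1"
    by (simp add: power_0_left)
  then show False
    using digits_large s_pos by linarith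
qed

lemma norm_term_le:
  assumes "admissible_offsets s d e" and "a \<in> digit_box s (q ^ l)"
  shows "cmod (digit_weight s f d (q ^ l) a *
                shifted_cube_sum s (shiftS q l f) (carry (q ^ l) a d) (carry (q ^ l) a e) N)
           \<le> card (shifted_Pi s (carry (q ^ l) a e) N) * G"
proof -
  have "admissible_offsets s (carry (q ^ l) a d) (carry (q ^ l) a e)"
    using assms s_pos digits_large by (intro admissible_offsets_carry) simp_all
  then show ?thesis
    using sub_bound by (simp add: norm_mult norm_digit_weight unimodular)
qed

lemma bound:
  assumes adm: "admissible_offsets s d e"
  shows "cmod (shifted_cube_sum s f d e (q ^ l * N)) \<le>
           card (shifted_Pi s e (q ^ l * N)) * G * (1 - carry_free_density s * t)"
proof -
  let ?p = "\<lambda>a. real (card (shifted_Pi s (carry (q ^ l) a e) N))"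
  let ?Z = "\<lambda>a. digit_weight s f d (q ^ l) a *
              shifted_cube_sum s (shiftS q l f) (carry (q ^ l) a d) (carry (q ^ l) a e) N"
  let ?C = "carry_free s (q ^ l) d e"
  have split: "shifted_cube_sum s f d e (q ^ l * N) = (\<Sum>a\<in>digit_box s (q ^ l). ?Z a)"
    using adm by (intro shifted_cube_sum_mult[OF q_mult q_pos]) (simp add: admissible_offsets_def)
  have card: "real (card (shifted_Pi s e (q ^ l * N))) = (\<Sum>a\<in>digit_box s (q ^ l). ?p a)"
    using card_shifted_Pi_mult[of "q ^ l" s e N] q_pos by simp
  have C: "?C \<subseteq> digit_box s (q ^ l)"
    by (auto simp: carry_free_def)
  have ZC: "cmod (?Z a) \<le> ?p a * G * (1 - t)" if "a \<in> ?C" for a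
    using that sub_bound_zero carry_free_carries[OF that]
    by (simp add: norm_mult norm_digit_weight unimodular)
  have "carry_free_density s * (\<Sum>a\<in>digit_box s (q ^ l). ?p a) \<le>
      real (card ?C) * real (card (shifted_Pi s (\<lambda>_. 0) N))"
    unfolding card[symmetric] using adm s_pos digits_large N_pos by (rule carry_free_mass)
  also have "\<dots> = (\<Sum>a\<in>?C. ?p a)"
    using carry_free_carries(2) by simp
  finally have mass: "carry_free_density s * (\<Sum>a\<in>digit_box s (q ^ l). ?p a) \<le> (\<Sum>a\<in>?C. ?p a)" .
  show ?thesis
    unfolding split card
    by (rule norm_sum_le_with_saving[OF finite_digit_box C norm_term_le[OF adm] ZC mass G_nonneg t_nonneg])
qed

lemma bound_zero_offsets:
  assumes gowers: "gowers_norm s (q ^ l) f \<le> 1 - \<epsilon>" and "0 \<le> \<epsilon>"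
  shows "cmod (shifted_cube_sum s f (\<lambda>_. 0) (\<lambda>_. 0) (q ^ l * N)) \<le>
           card (shifted_Pi s (\<lambda>_. 0) (q ^ l * N)) * G *
           ((1 - carry_free_density s / 2 * \<epsilon>) * (1 - carry_free_density s * t))"
proof -
  let ?d = "\<lambda>_. 0 :: int"
  let ?p = "\<lambda>a. real (card (shifted_Pi s (carry (q ^ l) a ?d) N))"
  let ?W = "digit_weight s f ?d (q ^ l)"
  let ?Z = "\<lambda>a. ?W a * shifted_cube_sum s (shiftS q l f) (carry (q ^ l) a ?d) (carry (q ^ l) a ?d) N"
  let ?C = "carry_free s (q ^ l) ?d ?d"
  have adm: "admissible_offsets s ?d ?d"
    by (simp add: admissible_offsets_def)
  have split: "shifted_cube_sum s f ?d ?d (q ^ l * N) = (\<Sum>a\<in>digit_box s (q ^ l). ?Z a)"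
    by (intro shifted_cube_sum_mult[OF q_mult q_pos]) simp
  have card: "real (card (shifted_Pi s ?d (q ^ l * N))) = (\<Sum>a\<in>digit_box s (q ^ l). ?p a)"
    using card_shifted_Pi_mult[of "q ^ l" s ?d N] q_pos by simp
  have C: "?C \<subseteq> digit_box s (q ^ l)"
    by (auto simp: carry_free_def)
  have ZC: "?p a = real (card (shifted_Pi s ?d N)) \<and>
      ?Z a = ?W a * shifted_cube_sum s (shiftS q l f) ?d ?d N" if "a \<in> ?C" for a
    using carry_free_carries[OF that] by simp
  have "?C = Pi_set s (q ^ l)"
    using q_pos by (intro carry_free_zero_offsets) simp_all
  then have WC: "cmod (\<Sum>a\<in>?C. ?W a) \<le> real (card ?C) * (1 - \<epsilon>)"
    using norm_shifted_cube_sum_zero_offsets_le[OF unimodular gowers]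
    by (simp add: sum_digit_weight_zero_offsets)
  have mass: "carry_free_density s * (\<Sum>a\<in>digit_box s (q ^ l). ?p a) \<le>
      real (card ?C) * real (card (shifted_Pi s ?d N))"
    unfolding card[symmetric] using adm s_pos digits_large N_pos by (rule carry_free_mass)
  have p_nonneg: "0 \<le> (\<Sum>a\<in>digit_box s (q ^ l). ?p a)"
    by (simp add: sum_nonneg)
  show ?thesis
    unfolding split card
    by (rule norm_sum_le_with_cancellation[OF finite_digit_box C norm_term_le[OF adm] ZC
          sub_bound_zero WC mass p_nonneg of_nat_0_le_iff G_nonneg t_nonneg t_le \<open>0 \<le> \<epsilon>\<close>
          less_imp_le[OF carry_free_density_pos]])
qed

end

section \<open>Iteration over the digit blocks\<close>

definition gowers_block_bounds ::
    "nat \<Rightarrow> nat \<Rightarrow> nat \<Rightarrow> (nat \<Rightarrow> complex) \<Rightarrow> (nat \<Rightarrow> nat) \<Rightarrow> (nat \<Rightarrow> real) \<Rightarrow> bool" where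
  "gowers_block_bounds q s l0 f K \<epsilon> \<longleftrightarrow> (\<forall>n. cmod (f n) = 1) \<and> q_multiplicative q f \<and>
     K 0 = 0 \<and> (\<forall>i. \<epsilon> i > 0) \<and> (\<forall>i. K i + l0 \<le> K (Suc i)) \<and>
     (\<forall>i. gowers_norm s (q ^ (K (Suc i) - K i)) (shiftS q (K i) f) \<le> 1 - \<epsilon> i)"

lemma gowers_block_bounds_eps:
  assumes "gowers_block_bounds q s l0 f K \<epsilon>"
  shows "0 \<le> \<epsilon> i \<and> \<epsilon> i \<le> 1"
proof -
  have "0 \<le> gowers_norm s (q ^ (K (Suc i) - K i)) (shiftS q (K i) f)"
    by (simp add: gowers_norm_def)
  moreover have "gowers_norm s (q ^ (K (Suc i) - K i)) (shiftS q (K i) f) \<le> 1 - \<epsilon> i"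
    and "0 < \<epsilon> i"
    using assms by (simp_all add: gowers_block_bounds_def)
  ultimately show ?thesis
    by linarith
qed

lemma gowers_block_bounds_first_block:
  assumes "gowers_block_bounds q s l0 f K \<epsilon>"
  shows "gowers_norm s (q ^ K 1) f \<le> 1 - \<epsilon> 0" and "l0 \<le> K 1"
proof -
  have "K 0 = 0" and "K 0 + l0 \<le> K (Suc 0)"
    and "gowers_norm s (q ^ (K (Suc 0) - K 0)) (shiftS q (K 0) f) \<le> 1 - \<epsilon> 0"
    using assms unfolding gowers_block_bounds_def by blast+
  then show "gowers_norm s (q ^ K 1) f \<le> 1 - \<epsilon> 0" and "l0 \<le> K 1"
    by simp_all
qed

lemma gowers_block_bounds_mono:
  assumes "gowers_block_bounds q s l0 f K \<epsilon>" and "i \<le> j"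
  shows "K i \<le> K j"
proof -
  have "K n \<le> K (Suc n)" for n
    using assms(1) unfolding gowers_block_bounds_def by (metis le_add1 order_trans)
  then show ?thesis
    using assms(2) by (rule lift_Suc_mono_le)
qed

lemma gowers_block_bounds_shift:
  assumes hyp: "gowers_block_bounds q s l0 f K \<epsilon>" and "0 < q"
  shows "gowers_block_bounds q s l0 (shiftS q (K 1) f) (\<lambda>i. K (Suc i) - K 1) (\<lambda>i. \<epsilon> (Suc i))"
proof -
  have step: "K i + l0 \<le> K (Suc i)" for i
    using hyp by (simp add: gowers_block_bounds_def)
  have mono: "K 1 \<le> K (Suc i)" for i
    using hyp by (rule gowers_block_bounds_mono) simp
  have "shiftS q (K (Suc i) - K 1) (shiftS q (K 1) f) = shiftS q (K (Suc i)) f" for i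
    using mono[of i] by (simp add: shiftS_shiftS)
  moreover have "K (Suc (Suc i)) - K 1 - (K (Suc i) - K 1) = K (Suc (Suc i)) - K (Suc i)" for i
    using mono[of i] mono[of "Suc i"] by simp
  moreover have "K (Suc i) - K 1 + l0 \<le> K (Suc (Suc i)) - K 1" for i
    using mono[of i] step[of "Suc i"] by linarith
  ultimately show ?thesis
    using hyp q_multiplicative_shiftS[OF _ \<open>0 < q\<close>]
    by (simp add: gowers_block_bounds_def shiftS_def)
qed

text \<open>There is no factor for \<open>i = 0\<close>: the first block only helps through the zero-offset bound
  in \<open>decay_bounds\<close>.\<close>

definition decay :: "real \<Rightarrow> (nat \<Rightarrow> real) \<Rightarrow> nat \<Rightarrow> real" where
  "decay \<alpha> \<epsilon> M = (\<Prod>i\<in>{1..<M}. 1 - \<alpha> * \<epsilon> i)"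

lemma decay_0 [simp]: "decay \<alpha> \<epsilon> 0 = 1"
  by (simp add: decay_def)

lemma decay_Suc:
  "decay \<alpha> \<epsilon> (Suc M) = (if M = 0 then 1 else 1 - \<alpha> * \<epsilon> 1) * decay \<alpha> (\<lambda>i. \<epsilon> (Suc i)) M"
proof (cases M)
  case (Suc M')
  have "decay \<alpha> \<epsilon> (Suc M) = (1 - \<alpha> * \<epsilon> 1) * (\<Prod>i\<in>{Suc 1..<Suc M}. 1 - \<alpha> * \<epsilon> i)"
    unfolding decay_def by (rule prod.atLeast_Suc_lessThan) (simp add: Suc)
  also have "(\<Prod>i\<in>{Suc 1..<Suc M}. 1 - \<alpha> * \<epsilon> i) = decay \<alpha> (\<lambda>i. \<epsilon> (Suc i)) M"
    unfolding decay_def by (rule prod.shift_bounds_Suc_ivl)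
  finally show ?thesis
    using Suc by simp
qed (simp add: decay_def)

lemma decay_nonneg:
  assumes "\<And>i. 0 \<le> \<alpha> * \<epsilon> i \<and> \<alpha> * \<epsilon> i \<le> 1"
  shows "0 \<le> decay \<alpha> \<epsilon> M"
  unfolding decay_def using assms by (intro prod_nonneg) (simp add: algebra_simps)

lemma decay_le_exp:
  assumes "\<And>i. 0 \<le> \<epsilon> i \<and> \<epsilon> i \<le> 1" and "0 \<le> \<alpha>" and "\<alpha> \<le> 1"
  shows "decay \<alpha> \<epsilon> M \<le> exp \<alpha> * exp (- \<alpha> * (\<Sum>i<M. \<epsilon> i))"
proof -
  have factor: "0 \<le> 1 - \<alpha> * \<epsilon> i \<and> 1 - \<alpha> * \<epsilon> i \<le> exp (- (\<alpha> * \<epsilon> i))" for i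
    using assms mult_le_one[of \<alpha> "\<epsilon> i"] exp_ge_add_one_self[of "- (\<alpha> * \<epsilon> i)"] by auto
  have "decay \<alpha> \<epsilon> M \<le> (\<Prod>i\<in>{1..<M}. exp (- (\<alpha> * \<epsilon> i)))"
    unfolding decay_def using factor by (intro prod_mono) auto
  also have "\<dots> = exp (- \<alpha> * (\<Sum>i\<in>{1..<M}. \<epsilon> i))"
    by (simp add: exp_sum sum_distrib_left)
  also have "\<dots> \<le> exp (\<alpha> - \<alpha> * (\<Sum>i<M. \<epsilon> i))"
  proof -
    have "(\<Sum>i<M. \<epsilon> i) \<le> 1 + (\<Sum>i\<in>{1..<M}. \<epsilon> i)"
    proof (cases M)
      case (Suc M')
      then show ?thesis
        using assms(1)[of 0] by (simp add: lessThan_atLeast0 sum.atLeast_Suc_lessThan)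
    qed simp
    from mult_left_mono[OF this assms(2)] show ?thesis
      by (simp add: algebra_simps)
  qed
  finally show ?thesis
    by (simp add: exp_diff exp_minus field_simps)
qed

definition decay_rate :: "nat \<Rightarrow> real" where
  "decay_rate s = carry_free_density s ^ 2 / 2"

lemma decay_rate_pos: "0 < decay_rate s"
  using carry_free_density_pos[of s] by (simp add: decay_rate_def)

lemma decay_rate_le_1: "decay_rate s \<le> 1"
proof -
  have "carry_free_density s ^ 2 \<le> 1"
    using carry_free_density_pos[of s] carry_free_density_le_1[of s] by (simp add: power_le_one)
  then show ?thesis
    by (simp add: decay_rate_def)
qed

definition decay_bounds :: "nat \<Rightarrow> nat \<Rightarrow> (nat \<Rightarrow> complex) \<Rightarrow> (nat \<Rightarrow> real) \<Rightarrow> nat \<Rightarrow> nat \<Rightarrow> bool" where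
  "decay_bounds q s f \<epsilon> M L \<longleftrightarrow>
     (\<forall>d e. admissible_offsets s d e \<longrightarrow> cmod (shifted_cube_sum s f d e (q ^ L)) \<le>
        card (shifted_Pi s e (q ^ L)) * decay (decay_rate s) \<epsilon> M) \<and>
     cmod (shifted_cube_sum s f (\<lambda>_. 0) (\<lambda>_. 0) (q ^ L)) \<le>
        card (shifted_Pi s (\<lambda>_. 0) (q ^ L)) * decay (decay_rate s) \<epsilon> M *
        (if M = 0 then 1 else 1 - carry_free_density s / 2 * \<epsilon> 0)"

lemma decay_bounds_0:
  assumes "\<And>n. cmod (f n) = 1"
  shows "decay_bounds q s f \<epsilon> 0 L"
  using norm_shifted_cube_sum_le[OF assms] by (simp add: decay_bounds_def)

lemma decay_bounds_Suc:
  assumes "2 \<le> q" and "1 \<le> s" and "6 * s \<le> l"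
    and "\<And>n. cmod (f n) = 1" and "q_multiplicative q f"
    and eps: "\<And>i. 0 \<le> \<epsilon> i \<and> \<epsilon> i \<le> 1" and gowers: "gowers_norm s (q ^ l) f \<le> 1 - \<epsilon> 0"
    and IH: "decay_bounds q s (shiftS q l f) (\<lambda>i. \<epsilon> (Suc i)) M L"
  shows "decay_bounds q s f \<epsilon> (Suc M) (l + L)"
proof -
  let ?\<kappa> = "carry_free_density s"
  let ?G = "decay (decay_rate s) (\<lambda>i. \<epsilon> (Suc i)) M"
  define t where "t = (if M = 0 then 0 else ?\<kappa> / 2 * \<epsilon> 1)"
  have "l < 2 ^ l"
    by (rule less_exp)
  also have "(2::nat) ^ l \<le> q ^ l"
    using \<open>2 \<le> q\<close> by (rule power_mono) simp
  finally have "l < q ^ l" .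
  interpret carry_step q s l "q ^ L" f ?G t
  proof
    show "6 * s \<le> q ^ l" using \<open>6 * s \<le> l\<close> \<open>l < q ^ l\<close> by linarith
    show "1 \<le> q ^ L" using \<open>2 \<le> q\<close> by simp
    show "0 \<le> ?G"
      using decay_rate_pos[of s] decay_rate_le_1[of s] eps by (intro decay_nonneg) (simp add: mult_le_one)
    show "0 \<le> t" and "t \<le> 1 / 2"
      using carry_free_density_pos[of s] carry_free_density_le_1[of s] eps[of 1]
      by (simp_all add: t_def mult_le_one)
    show "cmod (shifted_cube_sum s (shiftS q l f) d e (q ^ L)) \<le> card (shifted_Pi s e (q ^ L)) * ?G"
      if "admissible_offsets s d e" for d e
      using IH that by (simp add: decay_bounds_def)
    show "cmod (shifted_cube_sum s (shiftS q l f) (\<lambda>_. 0) (\<lambda>_. 0) (q ^ L)) \<le>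
        card (shifted_Pi s (\<lambda>_. 0) (q ^ L)) * ?G * (1 - t)"
      using IH by (cases "M = 0") (simp_all add: decay_bounds_def t_def)
  qed (use assms in simp_all)
  have decay: "decay (decay_rate s) \<epsilon> (Suc M) = ?G * (1 - ?\<kappa> * t)"
    by (simp add: decay_Suc decay_rate_def t_def power2_eq_square)
  show ?thesis
    unfolding decay_bounds_def power_add
    using bound bound_zero_offsets[OF gowers] eps[of 0] by (simp add: decay ac_simps)
qed

lemma decay_bounds_blocks:
  assumes "2 \<le> q" and "1 \<le> s" and "gowers_block_bounds q s (6 * s) f K \<epsilon>" and "K M \<le> L"
  shows "decay_bounds q s f \<epsilon> M L"
  using assms(3,4)
proof (induction M arbitrary: f K \<epsilon> L)
  case 0
  then show ?case
    by (intro decay_bounds_0) (simp add: gowers_block_bounds_def)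
next
  case (Suc M)
  note hyp = Suc.prems(1)
  have f: "\<And>n. cmod (f n) = 1" "q_multiplicative q f"
    using hyp by (simp_all add: gowers_block_bounds_def)
  have "K 1 \<le> K (Suc M)"
    using hyp by (rule gowers_block_bounds_mono) simp
  then have L: "K 1 + (L - K 1) = L" and "K (Suc M) - K 1 \<le> L - K 1"
    using Suc.prems(2) by simp_all
  then have "decay_bounds q s (shiftS q (K 1) f) (\<lambda>i. \<epsilon> (Suc i)) M (L - K 1)"
    using Suc.IH[OF gowers_block_bounds_shift[OF hyp]] assms(1) by simp
  from decay_bounds_Suc[where \<epsilon> = \<epsilon>, OF assms(1,2) gowers_block_bounds_first_block(2)[OF hyp] f
      gowers_block_bounds_eps[OF hyp] gowers_block_bounds_first_block(1)[OF hyp] this]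
  show ?case
    unfolding L .
qed

lemma A_avg_eq_shifted_cube_sum:
  "A_avg q s f r L = shifted_cube_sum s f (\<lambda>\<omega>. int (r \<omega>)) (\<lambda>_. 0) (q ^ L) /
     of_nat (card (shifted_Pi s (\<lambda>_. 0) (q ^ L)))"
  unfolding A_avg_def shifted_cube_sum_def Pi_set_eq_shifted_Pi
proof (intro arg_cong2[where f = "(/)"] sum.cong prod.cong refl)
  fix n \<omega> assume "n \<in> shifted_Pi s (\<lambda>_. 0) (q ^ L)" and "\<omega> \<in> Pow {1..s}"
  then have "0 \<le> cube_form n \<omega>"
    by (simp add: shifted_Pi_def)
  then show "conj_pow (card \<omega>) (f (nat (cube_form n \<omega>) + r \<omega>)) =
      conj_pow (card \<omega>) (f (nat (cube_form n \<omega> + int (r \<omega>))))"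
    by (simp add: nat_add_distrib)
qed

lemma norm_A_avg_le_decay:
  assumes "2 \<le> q" and "1 \<le> s" and hyp: "gowers_block_bounds q s (6 * s) f K \<epsilon>" and "K M \<le> L"
    and "\<forall>\<omega>\<in>Pow {1..s}. r \<omega> \<le> s"
  shows "cmod (A_avg q s f r L) \<le> decay (decay_rate s) \<epsilon> M"
proof -
  have "admissible_offsets s (\<lambda>\<omega>. int (r \<omega>)) (\<lambda>_. 0)"
    using assms(5) by (simp add: admissible_offsets_def)
  then have bound: "cmod (shifted_cube_sum s f (\<lambda>\<omega>. int (r \<omega>)) (\<lambda>_. 0) (q ^ L)) \<le>
      card (shifted_Pi s (\<lambda>_. 0) (q ^ L)) * decay (decay_rate s) \<epsilon> M"
    using decay_bounds_blocks[OF assms(1-4)] by (simp add: decay_bounds_def)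
  have "0 \<le> decay (decay_rate s) \<epsilon> M"
    using decay_rate_pos[of s] decay_rate_le_1[of s] gowers_block_bounds_eps[OF hyp]
    by (intro decay_nonneg) (simp add: mult_le_one)
  then show ?thesis
    using bound by (cases "card (shifted_Pi s (\<lambda>_. 0) (q ^ L)) = 0")
      (simp_all add: A_avg_eq_shifted_cube_sum norm_divide field_simps)
qed

theorem proposition3p3:
  fixes q s :: nat
  assumes "q \<ge> 2" and "s \<ge> 2"
  shows "\<exists>l0::nat. \<exists>c::real. \<exists>C::real. c > 0 \<and> C > 0 \<and>
    (\<forall>(f :: nat \<Rightarrow> complex) (K :: nat \<Rightarrow> nat) (\<epsilon> :: nat \<Rightarrow> real).
       (\<forall>n. cmod (f n) = 1) \<and> q_multiplicative q f \<and>
       K 0 = 0 \<and> (\<forall>i. \<epsilon> i > 0) \<and> (\<forall>i. K i + l0 \<le> K (Suc i)) \<and>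
       (\<forall>i. gowers_norm s (q ^ (K (Suc i) - K i)) (shiftS q (K i) f) \<le> 1 - \<epsilon> i)
     \<longrightarrow>
       (\<forall>M Kb (r :: nat set \<Rightarrow> nat). Kb \<ge> K M \<and> (\<forall>\<omega>\<in>Pow {1..s}. r \<omega> \<le> s) \<longrightarrow>
          cmod (A_avg q s f r Kb) \<le> C * exp (- c * (\<Sum>i<M. \<epsilon> i))))"
proof (intro exI conjI allI impI)
  show "0 < decay_rate s" and "0 < exp (decay_rate s)"
    by (simp_all add: decay_rate_pos)
  fix f K \<epsilon> M Kb and r :: "nat set \<Rightarrow> nat"
  assume "(\<forall>n. cmod (f n) = 1) \<and> q_multiplicative q f \<and> K 0 = 0 \<and> (\<forall>i. \<epsilon> i > 0) \<and>
      (\<forall>i. K i + 6 * s \<le> K (Suc i)) \<and>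
      (\<forall>i. gowers_norm s (q ^ (K (Suc i) - K i)) (shiftS q (K i) f) \<le> 1 - \<epsilon> i)"
  then have hyp: "gowers_block_bounds q s (6 * s) f K \<epsilon>"
    by (simp add: gowers_block_bounds_def)
  assume "K M \<le> Kb \<and> (\<forall>\<omega>\<in>Pow {1..s}. r \<omega> \<le> s)"
  then have "cmod (A_avg q s f r Kb) \<le> decay (decay_rate s) \<epsilon> M"
    using norm_A_avg_le_decay[OF assms(1) _ hyp] assms(2) by simp
  also have "\<dots> \<le> exp (decay_rate s) * exp (- decay_rate s * (\<Sum>i<M. \<epsilon> i))"
    using gowers_block_bounds_eps[OF hyp] decay_rate_pos[of s] decay_rate_le_1[of s]
    by (intro decay_le_exp) simp_all
  finally show "cmod (A_avg q s f r Kb) \<le> exp (decay_rate s) * exp (- decay_rate s * (\<Sum>i<M. \<epsilon> i))" .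
qed

end
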